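(* For $R>1$ define $\eta:[1,R]\to\mathbb R$ by \[ \eta(r)=\frac{1}{R^5-1}\left[(R^3-1)r^2+(R^2-1)\left(\frac{R}{r}\right)^3\right]. \] Then $\eta$ satisfies $\eta''+\frac2r\eta'-\frac6{r^2}\eta=0$ on $[1,R]$ with $\eta(1)=\eta(R)=1$. Moreover, there exists $R^*>1$ such that $\eta(r)\ge\frac23$ for all $1\le r\le R\le R^*$. *)

theory Defs
  imports "HOL-Analysis.Analysis"
begin

definition eta :: "real \<Rightarrow> real \<Rightarrow> real" where
  "eta R r = ((R^3 - 1) * r^2 + (R^2 - 1) * (R / r)^3) / (R^5 - 1)"

end

theory Submission
  imports Defs
begin

text \<open>Both terms of \<open>\<eta>\<close> are solutions of the Euler equation
  \<open>y'' + 2 y'/r - 6 y/r\<^sup>2 = 0\<close>, whose indicial roots are \<open>2\<close> and \<open>-3\<close>; the coefficients are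
  chosen to meet the boundary values. For the lower bound, on \<open>[1, R]\<close> both \<open>r\<^sup>2\<close> and \<open>(R/r)\<^sup>3\<close>
  are at least \<open>1\<close>, so \<open>\<eta> \<ge> (R\<^sup>3 + R\<^sup>2 - 2)/(R\<^sup>5 - 1)\<close>, and this quotient tends to \<open>5/5 = 1\<close>
  as \<open>R \<rightarrow> 1\<close>; explicitly it stays above \<open>2/3\<close> for \<open>R \<le> 11/10\<close>.\<close>

text \<open>This holds as an identity of functions, including at \<open>r = 0\<close>, where both sides divide by zero.\<close>

lemma eta_eq_power2_plus_inverse_cube:
  "eta R = (\<lambda>r. (R^3 - 1) / (R^5 - 1) * r^2 + (R^2 - 1) * R^3 / (R^5 - 1) / r^3)"
  by (auto simp: eta_def power_divide add_divide_distrib)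

lemma has_real_derivative_power2_plus_inverse_cube:
  fixes a b x :: real
  assumes "x \<noteq> 0"
  shows "((\<lambda>x. a * x^2 + b / x^3) has_real_derivative 2 * a * x - 3 * b / x^4) (at x)"
  using assms by (auto intro!: derivative_eq_intros simp: field_simps eval_nat_numeral)

lemma has_real_derivative_linear_plus_inverse_fourth:
  fixes a b x :: real
  assumes "x \<noteq> 0"
  shows "((\<lambda>x. 2 * a * x - 3 * b / x^4) has_real_derivative 2 * a + 12 * b / x^5) (at x)"
  using assms by (auto intro!: derivative_eq_intros simp: field_simps eval_nat_numeral)

lemma euler_equation_power2_plus_inverse_cube:
  fixes a b x :: real
  assumes "x \<noteq> 0" and f_eq: "f = (\<lambda>x. a * x^2 + b / x^3)"
  shows "f differentiable (at x)"
    and "deriv f differentiable (at x)"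
    and "deriv (deriv f) x + 2 / x * deriv f x - 6 / x^2 * f x = 0"
proof -
  have f': "deriv f y = 2 * a * y - 3 * b / y^4" if "y \<noteq> 0" for y
    using has_real_derivative_power2_plus_inverse_cube[OF that] unfolding f_eq
    by (rule DERIV_imp_deriv)
  have f'': "(deriv f has_real_derivative 2 * a + 12 * b / x^5) (at x)"
    using has_real_derivative_linear_plus_inverse_fourth[OF assms(1)]
    by (rule has_field_derivative_transform_within_open[where S = "-{0}"])
       (use assms(1) f' in auto)
  show "f differentiable (at x)"
    using has_real_derivative_power2_plus_inverse_cube[OF assms(1)]
    unfolding f_eq real_differentiable_def by blast
  show "deriv f differentiable (at x)"
    using f'' real_differentiable_def by blast
  show "deriv (deriv f) x + 2 / x * deriv f x - 6 / x^2 * f x = 0"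
  proof -
    have "deriv (deriv f) x + 2 / x * deriv f x - 6 / x^2 * f x
        = (2 * a + 12 * b / x^5) + 2 / x * (2 * a * x - 3 * b / x^4) - 6 / x^2 * (a * x^2 + b / x^3)"
      by (simp only: DERIV_imp_deriv[OF f''] f'[OF assms(1)]) (simp add: f_eq)
    also have "\<dots> = 0"
      using assms(1) by (simp add: field_simps eval_nat_numeral)
    finally show ?thesis .
  qed
qed

lemma eta_boundary_values:
  assumes "R > 1"
  shows "eta R 1 = 1" and "eta R R = 1"
proof -
  have "R^5 \<noteq> 1"
    using assms one_less_power[of R 5] by linarith
  then show "eta R 1 = 1" "eta R R = 1"
    using assms by (simp_all add: eta_def field_simps eval_nat_numeral)
qed

lemma eta_ge_boundary_quotient:
  assumes "1 < R" "1 \<le> r" "r \<le> R"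
  shows "(R^3 + R^2 - 2) / (R^5 - 1) \<le> eta R r"
proof -
  have "(R^3 - 1) * 1 \<le> (R^3 - 1) * r^2"
    using assms by (intro mult_left_mono) (auto simp: one_le_power one_less_power less_imp_le)
  moreover have "(R^2 - 1) * 1 \<le> (R^2 - 1) * (R / r)^3"
    using assms by (intro mult_left_mono) (auto simp: one_le_power one_less_power less_imp_le)
  moreover have "R^5 - 1 > 0"
    using assms by (simp add: one_less_power)
  ultimately show ?thesis
    unfolding eta_def by (intro divide_right_mono) auto
qed

lemma boundary_quotient_ge_two_thirds:
  fixes R :: real
  assumes "1 < R" "R \<le> 11/10"
  shows "2/3 \<le> (R^3 + R^2 - 2) / (R^5 - 1)"
proof -
  have "R^3 \<le> (11/10)^3" "R^4 \<le> (11/10)^4"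
    using assms by (intro power_mono; simp)+
  then have "R^3 \<le> 1331/1000" "R^4 \<le> 14641/10000"
    by (simp_all add: power_divide)
  then have "0 \<le> 4 + 4 * R + R^2 - 2 * R^3 - 2 * R^4"
    using assms zero_le_power2[of R] by linarith
  then have "0 \<le> (R - 1) * (4 + 4 * R + R^2 - 2 * R^3 - 2 * R^4)"
    using assms by simp
  then have "2 * (R^5 - 1) \<le> 3 * (R^3 + R^2 - 2)"
    by (simp add: algebra_simps eval_nat_numeral)
  moreover have "R^5 - 1 > 0"
    using assms by (simp add: one_less_power)
  ultimately show ?thesis
    by (simp add: le_divide_eq)
qed

theorem proposition3p1:
  shows "(\<forall>R::real. R > 1 \<longrightarrow>
            (\<forall>r \<in> {1..R}.
               eta R differentiable (at r) \<and>
               deriv (eta R) differentiable (at r) \<and>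
               deriv (deriv (eta R)) r + 2 / r * deriv (eta R) r - 6 / r^2 * eta R r = 0)
            \<and> eta R 1 = 1 \<and> eta R R = 1)
       \<and> (\<exists>Rs::real. Rs > 1 \<and>
            (\<forall>R r::real. 1 < R \<and> 1 \<le> r \<and> r \<le> R \<and> R \<le> Rs \<longrightarrow> eta R r \<ge> 2/3))"
proof (intro conjI allI impI ballI exI[of _ "11/10"])
  fix R r :: real
  assume "r \<in> {1..R}"
  then have "r \<noteq> 0" by auto
  note euler = euler_equation_power2_plus_inverse_cube[OF this eta_eq_power2_plus_inverse_cube]
  show "eta R differentiable (at r)" by (fact euler(1))
  show "deriv (eta R) differentiable (at r)" by (fact euler(2))
  show "deriv (deriv (eta R)) r + 2 / r * deriv (eta R) r - 6 / r^2 * eta R r = 0" by (fact euler(3))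
next
  fix R :: real
  assume "R > 1"
  then show "eta R 1 = 1" "eta R R = 1" by (fact eta_boundary_values)+
next
  fix R r :: real
  assume "1 < R \<and> 1 \<le> r \<and> r \<le> R \<and> R \<le> 11/10"
  then show "2/3 \<le> eta R r"
    using boundary_quotient_ge_two_thirds eta_ge_boundary_quotient by (meson order_trans)
qed simp

end
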